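(* Under the standing setting, if $f_0\in(0,\infty]$ and $f_\infty\in(0,\infty]$, then there exists $\underline\lambda>0$ such that problem (P$_\lambda$) has no positive solution for any $\lambda>\underline\lambda$.
   Context: Standing setting. $\varphi:\mathbb{R}\to\mathbb{R}$ is an odd, increasing homeomorphism satisfying condition (A): there exist increasing homeomorphisms $\psi_1,\psi_2:[0,\infty)\to[0,\infty)$ such that $\varphi(x)\psi_1(y)\le \varphi(xy)\le \varphi(x)\psi_2(y)$ for all $x,y\ge 0$. Let $c,d\in C([0,1],(0,\infty))$, and $\|\cdot\|_\infty$ the maximum norm on $C[0,1]$. Let $f\in C([0,\infty),[0,\infty))$ with $f(s)>0$ for $s>0$, and write $f_0=\lim_{s\to0^+}f(s)/\varphi(s)$, $f_\infty=\lim_{s\to\infty}f(s)/\varphi(s)$ (assumed to exist in $[0,\infty]$ whenever referred to). Let $h\in C((0,1),[0,\infty))$, $h\not\equiv 0$, with $\int_0^{1/2}\psi_1^{-1}\big(\int_s^{1/2}h(\tau)d\tau\big)ds+\int_{1/2}^1\psi_1^{-1}\big(\int_{1/2}^s h(\tau)d\tau\big)ds<\infty$. Notation attached to $h$: $\alpha_h=\sup\{x\in(0,1): h=0 \text{ on }(0,x)\}$ ($0$ if empty); $\beta_h=\inf\{x\in(0,1): h=0\text{ on }(x,1)\}$ ($1$ if empty); $\bar\alpha_h=\sup\{x\in(\alpha_h,1]: h>0 \text{ on }(\alpha_h,x)\}$; $\bar\beta_h=\inf\{x\in[0,\beta_h): h>0\text{ on }(x,\beta_h)\}$; $\gamma_h^1=(3\alpha_h+\bar\alpha_h)/4$,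 $\gamma_h^2=(\bar\beta_h+3\beta_h)/4$. It is assumed that $0\le\alpha_h<\gamma_h^1<\gamma_h^2<\beta_h\le 1$. For $\lambda\ge0$, problem (P$_\lambda$) is: $(d(t)\varphi(c(t)u'(t)))'+\lambda h(t)f(u(t))=0$ for $t\in(0,1)$, $u(0)=u(1)=0$. A solution is $u\in C[0,1]\cap C^1(0,1)$ such that $t\mapsto d(t)\varphi(c(t)u'(t))$ is continuously differentiable on $(0,1)$ and the equation and boundary conditions hold; it is positive if $u(t)>0$ for all $t\in(0,1)$. *)

theory Defs
  imports "HOL-Analysis.Analysis"
begin

definition inc_homeo_nonneg :: "(real \<Rightarrow> real) \<Rightarrow> bool" where
  "inc_homeo_nonneg \<psi> \<longleftrightarrow> strict_mono_on {0..} \<psi> \<and> continuous_on {0..} \<psi> \<and> \<psi> ` {0..} = {0..}"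

definition odd_inc_homeo :: "(real \<Rightarrow> real) \<Rightarrow> bool" where
  "odd_inc_homeo \<phi> \<longleftrightarrow> (\<forall>x. \<phi> (-x) = - \<phi> x) \<and> strict_mono \<phi> \<and> continuous_on UNIV \<phi> \<and> surj \<phi>"

definition condA :: "(real \<Rightarrow> real) \<Rightarrow> (real \<Rightarrow> real) \<Rightarrow> (real \<Rightarrow> real) \<Rightarrow> bool" where
  "condA \<phi> \<psi>1 \<psi>2 \<longleftrightarrow> inc_homeo_nonneg \<psi>1 \<and> inc_homeo_nonneg \<psi>2 \<and>
     (\<forall>x\<ge>0. \<forall>y\<ge>0. \<phi> x * \<psi>1 y \<le> \<phi> (x * y) \<and> \<phi> (x * y) \<le> \<phi> x * \<psi>2 y)"

definition h_integrability :: "(real \<Rightarrow> real) \<Rightarrow> (real \<Rightarrow> real) \<Rightarrow> bool" where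
  "h_integrability \<psi>1 h \<longleftrightarrow>
     (\<integral>\<^sup>+ s. indicator {0<..<1/2} s * ennreal (inv_into {0..} \<psi>1 (integral {s..1/2} h)) \<partial>lborel)
   + (\<integral>\<^sup>+ s. indicator {1/2<..<1} s * ennreal (inv_into {0..} \<psi>1 (integral {1/2..s} h)) \<partial>lborel)
   < \<infinity>"

definition alpha_h :: "(real \<Rightarrow> real) \<Rightarrow> real" where
  "alpha_h h = (let S = {x \<in> {0<..<1}. \<forall>t\<in>{0<..<x}. h t = 0} in if S = {} then 0 else Sup S)"

definition beta_h :: "(real \<Rightarrow> real) \<Rightarrow> real" where
  "beta_h h = (let S = {x \<in> {0<..<1}. \<forall>t\<in>{x<..<1}. h t = 0} in if S = {} then 1 else Inf S)"

text \<open>If the defining set is empty we take \<alpha>_h (resp. \<beta>_h), so that the standing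
  assumption \<alpha>_h < \<gamma>^1 (resp. \<gamma>^2 < \<beta>_h) fails in that degenerate case.\<close>
definition alpha_bar_h :: "(real \<Rightarrow> real) \<Rightarrow> real" where
  "alpha_bar_h h = (let a = alpha_h h; S = {x \<in> {a<..1}. \<forall>t\<in>{a<..<x}. h t > 0}
     in if S = {} then a else Sup S)"

definition beta_bar_h :: "(real \<Rightarrow> real) \<Rightarrow> real" where
  "beta_bar_h h = (let b = beta_h h; S = {x \<in> {0..<b}. \<forall>t\<in>{x<..<b}. h t > 0}
     in if S = {} then b else Inf S)"

definition gamma1_h :: "(real \<Rightarrow> real) \<Rightarrow> real" where
  "gamma1_h h = (3 * alpha_h h + alpha_bar_h h) / 4"

definition gamma2_h :: "(real \<Rightarrow> real) \<Rightarrow> real" where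
  "gamma2_h h = (beta_bar_h h + 3 * beta_h h) / 4"

definition is_solution ::
  "(real \<Rightarrow> real) \<Rightarrow> (real \<Rightarrow> real) \<Rightarrow> (real \<Rightarrow> real) \<Rightarrow> (real \<Rightarrow> real) \<Rightarrow> (real \<Rightarrow> real)
    \<Rightarrow> real \<Rightarrow> (real \<Rightarrow> real) \<Rightarrow> bool" where
  "is_solution \<phi> c d h f lam u \<longleftrightarrow>
     continuous_on {0..1} u \<and>
     (\<exists>u'. (\<forall>t\<in>{0<..<1}. (u has_real_derivative u' t) (at t)) \<and> continuous_on {0<..<1} u' \<and>
        (\<exists>w'. (\<forall>t\<in>{0<..<1}. ((\<lambda>s. d s * \<phi> (c s * u' s)) has_real_derivative w' t) (at t)) \<and>
              continuous_on {0<..<1} w' \<and>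
              (\<forall>t\<in>{0<..<1}. w' t + lam * h t * f (u t) = 0))) \<and>
     u 0 = 0 \<and> u 1 = 0"

definition is_positive_solution ::
  "(real \<Rightarrow> real) \<Rightarrow> (real \<Rightarrow> real) \<Rightarrow> (real \<Rightarrow> real) \<Rightarrow> (real \<Rightarrow> real) \<Rightarrow> (real \<Rightarrow> real)
    \<Rightarrow> real \<Rightarrow> (real \<Rightarrow> real) \<Rightarrow> bool" where
  "is_positive_solution \<phi> c d h f lam u \<longleftrightarrow>
     is_solution \<phi> c d h f lam u \<and> (\<forall>t\<in>{0<..<1}. u t > 0)"

end

theory Submission imports Defs begin

text \<open>
  Let \<open>u\<close> be a positive solution, \<open>W = d \<phi>(c u')\<close> its flux and \<open>\<tau>\<close> a maximum point of \<open>u\<close>,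
  so \<open>W\<close> is nonincreasing with \<open>W \<tau> = 0\<close>. Fix an interval \<open>[a, t\<^sub>0]\<close> on which \<open>h \<ge> h\<^sub>0 > 0\<close> and
  suppose \<open>t\<^sub>0 \<le> \<tau>\<close> (otherwise reflect \<open>t \<mapsto> 1 - t\<close>). Since \<open>f_0, f_\<infinity> > 0\<close>, \<open>f \<ge> m \<phi>\<close> on \<open>(0, \<infinity>)\<close>.
  Integrating the equation over \<open>[a, t\<^sub>0]\<close>, where \<open>u \<ge> u a\<close>, gives
  \<open>W a \<ge> \<lambda> (t\<^sub>0 - a) h\<^sub>0 m \<phi>(u a)\<close>; the mean value theorem for \<open>u\<close> on \<open>[0, a]\<close> and condition (A)
  give \<open>W a \<le> D \<phi>(u a) \<psi>\<^sub>2(C / a)\<close>, with \<open>C, D\<close> bounds of \<open>c, d\<close>. Dividing by \<open>\<phi>(u a) > 0\<close>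
  bounds \<open>\<lambda>\<close> by a constant independent of \<open>u\<close>.
\<close>

lemma odd_inc_homeo_0:
  assumes "odd_inc_homeo \<phi>"
  shows "\<phi> 0 = 0"
  using assms unfolding odd_inc_homeo_def by (metis add.inverse_neutral neg_equal_zero)

lemma odd_inc_homeo_le_iff:
  assumes "odd_inc_homeo \<phi>"
  shows "\<phi> x \<le> \<phi> y \<longleftrightarrow> x \<le> y"
  using assms unfolding odd_inc_homeo_def by (simp add: strict_mono_less_eq)

lemma odd_inc_homeo_pos_iff:
  assumes "odd_inc_homeo \<phi>"
  shows "0 < \<phi> x \<longleftrightarrow> 0 < x"
  using assms odd_inc_homeo_0[OF assms] unfolding odd_inc_homeo_def by (metis strict_mono_less)

lemma odd_inc_homeo_nonneg_iff:
  assumes "odd_inc_homeo \<phi>"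
  shows "0 \<le> \<phi> x \<longleftrightarrow> 0 \<le> x"
  using odd_inc_homeo_le_iff[OF assms, of 0 x] by (simp add: odd_inc_homeo_0[OF assms])

lemma ratio_limits_pos_imp_lower_bound:
  fixes f g :: "real \<Rightarrow> real" and l0 linf :: ereal
  assumes cont: "continuous_on {0<..} f" "continuous_on {0<..} g"
    and pos: "\<forall>s>0. 0 < f s" "\<forall>s>0. 0 < g s"
    and lim0: "((\<lambda>s. ereal (f s / g s)) \<longlongrightarrow> l0) (at_right 0)" "0 < l0"
    and liminf: "((\<lambda>s. ereal (f s / g s)) \<longlongrightarrow> linf) at_top" "0 < linf"
  shows "\<exists>m>0. \<forall>s>0. m * g s \<le> f s"
proof -
  obtain r0 where r0: "0 < ereal r0" "ereal r0 < l0" using ereal_dense2[OF lim0(2)] by blast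
  obtain rinf where rinf: "0 < ereal rinf" "ereal rinf < linf" using ereal_dense2[OF liminf(2)] by blast
  obtain b where b: "0 < b" "\<And>s. 0 < s \<Longrightarrow> s < b \<Longrightarrow> r0 < f s / g s"
    using order_tendstoD(1)[OF lim0(1) r0(2)] unfolding eventually_at_right_field by auto
  obtain N where N: "\<And>s. N \<le> s \<Longrightarrow> rinf < f s / g s"
    using order_tendstoD(1)[OF liminf(1) rinf(2)] unfolding eventually_at_top_linorder by auto
  have "{b..max b N} \<subseteq> {0<..}" using b(1) by auto
  then have ratio_cont: "continuous_on {b..max b N} (\<lambda>s. f s / g s)"
    using cont pos(2) by (auto intro!: continuous_on_divide intro: continuous_on_subset)
  then obtain x where x: "x \<in> {b..max b N}" "\<And>s. s \<in> {b..max b N} \<Longrightarrow> f x / g x \<le> f s / g s"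
    using continuous_attains_inf[OF compact_Icc _ ratio_cont] b(1) by auto
  define m where "m = min (f x / g x) (min r0 rinf)"
  have "0 < f x / g x" using x(1) b(1) pos by auto
  then have "0 < m" using r0(1) rinf(1) by (simp add: m_def)
  moreover have "m * g s \<le> f s" if "0 < s" for s
  proof -
    have "m \<le> f s / g s"
      using b(2)[OF that] N[of s] x(2)[of s] by (cases "s < b"; cases "N \<le> s") (auto simp: m_def)
    then show ?thesis using pos(2) that by (simp add: pos_le_divide_eq)
  qed
  ultimately show ?thesis by blast
qed

lemma continuous_on_pos_imp_bounded_below_on_cball:
  fixes h :: "'a::metric_space \<Rightarrow> real"
  assumes "continuous_on S h" "open S" "t \<in> S" "0 < h t"
  shows "\<exists>r>0. \<exists>h0>0. cball t r \<subseteq> S \<and> (\<forall>x\<in>cball t r. h0 \<le> h x)"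
proof -
  have "open (S \<inter> h -` {h t / 2<..})" using assms(1,2) by (rule continuous_open_preimage) simp
  moreover have "t \<in> S \<inter> h -` {h t / 2<..}" using assms(3,4) by simp
  ultimately obtain r where r: "0 < r" "cball t r \<subseteq> S \<inter> h -` {h t / 2<..}"
    using open_contains_cball by blast
  then have "\<forall>x\<in>cball t r. h t / 2 \<le> h x" by fastforce
  then show ?thesis using r assms(4) by (metis half_gt_zero le_infE)
qed

lemma flux_upper_bound:
  fixes \<phi> \<psi>2 u u' c d :: "real \<Rightarrow> real"
  assumes phi: "odd_inc_homeo \<phi>"
    and psi2: "\<forall>x\<ge>0. \<forall>y\<ge>0. \<phi> (x * y) \<le> \<phi> x * \<psi>2 y"
    and a: "0 < a"
    and u: "continuous_on {0..a} u" "\<forall>t\<in>{0<..<a}. (u has_real_derivative u' t) (at t)"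
      "u 0 = 0" "0 \<le> u a"
    and c: "\<forall>t\<in>{0<..<a}. 0 < c t \<and> c t \<le> C"
    and d: "\<forall>t\<in>{0<..<a}. 0 < d t \<and> d t \<le> D"
    and w: "0 \<le> w" "\<forall>t\<in>{0<..<a}. w \<le> d t * \<phi> (c t * u' t)"
  shows "w \<le> D * (\<phi> (u a) * \<psi>2 (C / a))"
proof -
  obtain l z where z: "0 < z" "z < a" "(u has_real_derivative l) (at z)" "u a - u 0 = (a - 0) * l"
    using MVT[OF a u(1)] u(2) real_differentiable_def by (metis greaterThanLessThan_iff)
  have "l = u' z" using DERIV_unique[OF z(3)] u(2) z(1,2) by auto
  then have u'z: "u' z = u a / a" using z(4) u(3) a by (simp add: field_simps)
  have cz: "0 < c z" "c z \<le> C" and dz: "0 < d z" "d z \<le> D" using c d z(1,2) by auto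
  have w_le: "w \<le> d z * \<phi> (c z * u' z)" using w(2) z(1,2) by simp
  then have "0 \<le> d z * \<phi> (c z * u' z)" using w(1) by linarith
  then have phi_nonneg: "0 \<le> \<phi> (c z * u' z)" using dz(1) by (simp add: zero_le_mult_iff)
  have "c z * u' z \<le> C * (u a / a)"
    using cz u(4) a unfolding u'z by (intro mult_right_mono) auto
  then have "\<phi> (c z * u' z) \<le> \<phi> (u a * (C / a))"
    by (simp add: odd_inc_homeo_le_iff[OF phi] field_simps)
  also have "\<dots> \<le> \<phi> (u a) * \<psi>2 (C / a)"
    using psi2 u(4) cz a by (meson divide_nonneg_pos order_less_le_trans less_imp_le)
  finally have phi_le: "\<phi> (c z * u' z) \<le> \<phi> (u a) * \<psi>2 (C / a)" .
  have "w \<le> D * \<phi> (c z * u' z)"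
    using w_le mult_right_mono[OF dz(2) phi_nonneg] by linarith
  also have "\<dots> \<le> D * (\<phi> (u a) * \<psi>2 (C / a))" using phi_le dz by (intro mult_left_mono) auto
  finally show ?thesis .
qed

lemma flux_drop_lower_bound:
  fixes \<phi> W u h f :: "real \<Rightarrow> real"
  assumes phi: "odd_inc_homeo \<phi>"
    and W: "\<forall>t\<in>{a..b}. (W has_real_derivative - (lam * h t * f (u t))) (at t)"
    and ab: "a < b"
    and u: "0 < u a" "\<forall>t\<in>{a..b}. u a \<le> u t"
    and h: "0 \<le> h0" "\<forall>t\<in>{a..b}. h0 \<le> h t"
    and f: "0 \<le> m" "\<forall>s>0. m * \<phi> s \<le> f s"
    and lam: "0 \<le> lam"
  shows "lam * (m * h0 * (b - a)) * \<phi> (u a) \<le> W a - W b"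
proof -
  obtain z where z: "a < z" "z < b" "W b - W a = (b - a) * - (lam * h z * f (u z))"
    using MVT2[OF ab, of W "\<lambda>t. - (lam * h t * f (u t))"] W by auto
  have "m * \<phi> (u a) \<le> m * \<phi> (u z)"
    using u z f(1) by (intro mult_left_mono) (auto simp: odd_inc_homeo_le_iff[OF phi])
  also have "\<dots> \<le> f (u z)" using f(2) u z by (metis atLeastAtMost_iff less_eq_real_def order_less_le_trans)
  moreover have "h0 \<le> h z" using h(2) z by simp
  ultimately have "h0 * (m * \<phi> (u a)) \<le> h z * f (u z)"
    using h(1) f(1) u(1) by (intro mult_mono) (auto simp: odd_inc_homeo_nonneg_iff[OF phi])
  then have "lam * (b - a) * (h0 * (m * \<phi> (u a))) \<le> lam * (b - a) * (h z * f (u z))"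
    using lam ab by (intro mult_left_mono) auto
  then show ?thesis using z(3) by (simp add: algebra_simps)
qed

lemma positive_solution_flux_shape:
  fixes \<phi> c d h f u :: "real \<Rightarrow> real"
  assumes phi: "odd_inc_homeo \<phi>"
    and cd: "\<forall>t\<in>{0<..<1}. 0 < c t \<and> 0 < d t"
    and h: "\<forall>t\<in>{0<..<1}. 0 \<le> h t"
    and f: "\<forall>s>0. 0 \<le> f s"
    and lam: "0 \<le> lam"
    and u: "is_positive_solution \<phi> c d h f lam u"
    and tau: "tau \<in> {0..1}" "\<forall>y\<in>{0..1}. u y \<le> u tau"
  obtains u' where "0 < tau" "tau < 1"
    "\<forall>t\<in>{0<..<1}. (u has_real_derivative u' t) (at t)"
    "\<forall>t\<in>{0<..<1}. ((\<lambda>s. d s * \<phi> (c s * u' s)) has_real_derivative - (lam * h t * f (u t))) (at t)"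
    "\<And>x y. 0 < x \<Longrightarrow> x \<le> y \<Longrightarrow> y < 1 \<Longrightarrow> d y * \<phi> (c y * u' y) \<le> d x * \<phi> (c x * u' x)"
    "d tau * \<phi> (c tau * u' tau) = 0"
    "\<And>s t. 0 < s \<Longrightarrow> s \<le> t \<Longrightarrow> t \<le> tau \<Longrightarrow> u s \<le> u t"
proof -
  obtain u' w' where
      u01: "u 0 = 0" "u 1 = 0" and u_pos: "\<forall>t\<in>{0<..<1}. 0 < u t" and
      u': "\<forall>t\<in>{0<..<1}. (u has_real_derivative u' t) (at t)" and
      w': "\<forall>t\<in>{0<..<1}. ((\<lambda>s. d s * \<phi> (c s * u' s)) has_real_derivative w' t) (at t)" and
      eq: "\<forall>t\<in>{0<..<1}. w' t + lam * h t * f (u t) = 0"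
    using u unfolding is_positive_solution_def is_solution_def by blast
  define W where "W s = d s * \<phi> (c s * u' s)" for s
  have W': "\<forall>t\<in>{0<..<1}. (W has_real_derivative - (lam * h t * f (u t))) (at t)"
    using w' eq unfolding W_def by (metis add_eq_0_iff2 minus_equation_iff)
  have "0 \<le> lam * h t * f (u t)" if "t \<in> {0<..<1}" for t
    using lam h f u_pos that by simp
  then have W_anti: "W y \<le> W x" if "0 < x" "x \<le> y" "y < 1" for x y
    using that W' by (intro DERIV_nonpos_imp_nonincreasing[of x y W]) force+
  have "0 < u (1/2)" "u (1/2) \<le> u tau" using u_pos tau(2) by auto
  then have "0 < u tau" by linarith
  then have "tau \<noteq> 0" "tau \<noteq> 1" using u01 by auto
  then have tau01: "0 < tau" "tau < 1" using tau(1) by auto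
  have "u' tau = 0"
    using tau01 tau(2) by (intro DERIV_local_max[OF u'[rule_format], of _ "min tau (1 - tau)"])
      (auto simp: abs_less_iff)
  then have W_tau: "W tau = 0" by (simp add: W_def odd_inc_homeo_0[OF phi])
  have u'_nonneg: "0 \<le> u' t" if "0 < t" "t \<le> tau" for t
  proof -
    have "0 \<le> W t" using W_anti[of t tau] W_tau that tau01 by simp
    then have "0 \<le> d t * \<phi> (c t * u' t)" by (simp add: W_def)
    moreover have "0 < c t" "0 < d t" using cd that tau01 by auto
    ultimately show ?thesis by (simp add: zero_le_mult_iff odd_inc_homeo_nonneg_iff[OF phi])
  qed
  have "u s \<le> u t" if "0 < s" "s \<le> t" "t \<le> tau" for s t
  proof (rule DERIV_nonneg_imp_nondecreasing[OF that(2)])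
    fix x assume "s \<le> x" "x \<le> t"
    then have "x \<in> {0<..<1}" "x \<le> tau" using that tau01 by auto
    then show "\<exists>y. (u has_real_derivative y) (at x) \<and> 0 \<le> y" using u' u'_nonneg by force
  qed
  then show ?thesis using that tau01 u' W' W_anti W_tau unfolding W_def by blast
qed

lemma positive_solution_lambda_bound_left:
  fixes \<phi> \<psi>2 c d h f u :: "real \<Rightarrow> real"
  assumes phi: "odd_inc_homeo \<phi>"
    and psi2: "\<forall>x\<ge>0. \<forall>y\<ge>0. \<phi> (x * y) \<le> \<phi> x * \<psi>2 y"
    and c: "\<forall>t\<in>{0<..<1}. 0 < c t \<and> c t \<le> C"
    and d: "\<forall>t\<in>{0<..<1}. 0 < d t \<and> d t \<le> D"
    and h: "\<forall>t\<in>{0<..<1}. 0 \<le> h t" "0 \<le> h0" "\<forall>t\<in>{a..t0}. h0 \<le> h t"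
    and f: "0 \<le> m" "\<forall>s>0. m * \<phi> s \<le> f s"
    and a: "0 < a" "a < t0"
    and lam: "0 \<le> lam"
    and u: "is_positive_solution \<phi> c d h f lam u"
    and tau: "tau \<in> {0..1}" "\<forall>y\<in>{0..1}. u y \<le> u tau" "t0 \<le> tau"
  shows "lam * (m * h0 * (t0 - a)) \<le> D * \<psi>2 (C / a)"
proof -
  have "\<forall>s>0. 0 \<le> f s"
    using f odd_inc_homeo_pos_iff[OF phi] by (meson mult_nonneg_nonneg less_imp_le order_trans)
  moreover have "\<forall>t\<in>{0<..<1}. 0 < c t \<and> 0 < d t" using c d by blast
  ultimately obtain u' where tau01: "0 < tau" "tau < 1"
    and u': "\<forall>t\<in>{0<..<1}. (u has_real_derivative u' t) (at t)"
    and W': "\<forall>t\<in>{0<..<1}. ((\<lambda>s. d s * \<phi> (c s * u' s)) has_real_derivative - (lam * h t * f (u t))) (at t)"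
    and W_anti: "\<And>x y. 0 < x \<Longrightarrow> x \<le> y \<Longrightarrow> y < 1 \<Longrightarrow> d y * \<phi> (c y * u' y) \<le> d x * \<phi> (c x * u' x)"
    and W_tau: "d tau * \<phi> (c tau * u' tau) = 0"
    and u_mono: "\<And>s t. 0 < s \<Longrightarrow> s \<le> t \<Longrightarrow> t \<le> tau \<Longrightarrow> u s \<le> u t"
    using positive_solution_flux_shape[OF phi _ h(1) _ lam u tau(1,2)] by blast
  define W where "W s = d s * \<phi> (c s * u' s)" for s
  have u_cont: "continuous_on {0..1} u" and u0: "u 0 = 0" and ua_pos: "0 < u a"
    using u a tau01 tau(3) by (auto simp: is_positive_solution_def is_solution_def)
  have W_deriv: "\<forall>t\<in>{a..t0}. (W has_real_derivative - (lam * h t * f (u t))) (at t)"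
    and u_incr: "\<forall>t\<in>{a..t0}. u a \<le> u t"
    using W' u_mono a tau01 tau(3) unfolding W_def by auto
  have upper: "W a \<le> D * (\<phi> (u a) * \<psi>2 (C / a))"
  proof (rule flux_upper_bound[OF phi psi2 a(1)])
    show "continuous_on {0..a} u" using u_cont a tau01 tau(3) by (auto intro: continuous_on_subset)
    show "0 \<le> W a" using W_anti[of a tau] W_tau a tau(3) tau01 unfolding W_def by simp
    show "\<forall>t\<in>{0<..<a}. W a \<le> d t * \<phi> (c t * u' t)" using W_anti a tau(3) tau01 unfolding W_def by simp
  qed (use u' u0 c d ua_pos a tau01 tau(3) in auto)
  have lower: "lam * (m * h0 * (t0 - a)) * \<phi> (u a) \<le> W a - W t0"
    by (rule flux_drop_lower_bound[OF phi W_deriv a(2) ua_pos u_incr h(2,3) f lam])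
  have "0 \<le> W t0" using W_anti[of t0 tau] W_tau a tau(3) tau01 unfolding W_def by simp
  then have "lam * (m * h0 * (t0 - a)) * \<phi> (u a) \<le> D * \<psi>2 (C / a) * \<phi> (u a)"
    using upper lower by (simp add: mult_ac)
  moreover have "0 < \<phi> (u a)" using ua_pos by (simp add: odd_inc_homeo_pos_iff[OF phi])
  ultimately show ?thesis by simp
qed

lemma is_positive_solution_reflect:
  assumes phi: "odd_inc_homeo \<phi>" and u: "is_positive_solution \<phi> c d h f lam u"
  shows "is_positive_solution \<phi> (\<lambda>t. c (1 - t)) (\<lambda>t. d (1 - t)) (\<lambda>t. h (1 - t)) f lam (\<lambda>t. u (1 - t))"
proof -
  obtain u' w' where
      u_cont: "continuous_on {0..1} u" and u01: "u 0 = 0" "u 1 = 0" and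
      u_pos: "\<forall>t\<in>{0<..<1}. 0 < u t" and
      u': "\<forall>t\<in>{0<..<1}. (u has_real_derivative u' t) (at t)" "continuous_on {0<..<1} u'" and
      w': "\<forall>t\<in>{0<..<1}. ((\<lambda>s. d s * \<phi> (c s * u' s)) has_real_derivative w' t) (at t)"
        "continuous_on {0<..<1} w'" and
      eq: "\<forall>t\<in>{0<..<1}. w' t + lam * h t * f (u t) = 0"
    using u unfolding is_positive_solution_def is_solution_def by blast
  have flip: "(\<lambda>t::real. 1 - t) ` {0<..<1} \<subseteq> {0<..<1}" "(\<lambda>t::real. 1 - t) ` {0..1} \<subseteq> {0..1}"
    by auto
  have flip_cont: "continuous_on S (\<lambda>t::real. 1 - t)" for S by (intro continuous_intros)
  have flip_deriv: "((\<lambda>t. 1 - t) has_real_derivative -1) (at t)" for t :: real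
    by (rule derivative_eq_intros refl)+ simp
  have flux_flip: "d (1 - s) * \<phi> (c (1 - s) * - u' (1 - s)) = - (d (1 - s) * \<phi> (c (1 - s) * u' (1 - s)))"
    for s using phi by (simp add: odd_inc_homeo_def)
  have "((\<lambda>t. u (1 - t)) has_real_derivative - u' (1 - t)) (at t)" if "t \<in> {0<..<1}" for t
    using DERIV_chain2[OF _ flip_deriv, of u] u'(1) that by force
  moreover have "((\<lambda>s. d (1 - s) * \<phi> (c (1 - s) * - u' (1 - s))) has_real_derivative w' (1 - t)) (at t)"
    if "t \<in> {0<..<1}" for t
    unfolding flux_flip using DERIV_minus[OF DERIV_chain2[OF _ flip_deriv]] w'(1) that by force
  moreover have "continuous_on {0<..<1} (\<lambda>t. - u' (1 - t))"
    using continuous_on_compose2[OF u'(2) flip_cont flip(1)] by (rule continuous_on_minus)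
  moreover have "continuous_on {0<..<1} (\<lambda>t. w' (1 - t))"
    using continuous_on_compose2[OF w'(2) flip_cont flip(1)] .
  moreover have "continuous_on {0..1} (\<lambda>t. u (1 - t))"
    using continuous_on_compose2[OF u_cont flip_cont flip(2)] .
  ultimately show ?thesis
    using u01 u_pos eq unfolding is_positive_solution_def is_solution_def
    by (intro conjI exI[of _ "\<lambda>t. - u' (1 - t)"] exI[of _ "\<lambda>t. w' (1 - t)"]) auto
qed

lemma positive_solution_lambda_bound:
  fixes \<phi> \<psi>2 c d h f u :: "real \<Rightarrow> real"
  assumes phi: "odd_inc_homeo \<phi>"
    and psi2: "\<forall>x\<ge>0. \<forall>y\<ge>0. \<phi> (x * y) \<le> \<phi> x * \<psi>2 y"
    and c: "\<forall>t\<in>{0<..<1}. 0 < c t \<and> c t \<le> C"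
    and d: "\<forall>t\<in>{0<..<1}. 0 < d t \<and> d t \<le> D"
    and h: "\<forall>t\<in>{0<..<1}. 0 \<le> h t" "0 \<le> h0" "\<forall>t\<in>{t0 - r..t0 + r}. h0 \<le> h t"
    and f: "0 \<le> m" "\<forall>s>0. m * \<phi> s \<le> f s"
    and r: "0 < r" "0 < t0 - r" "t0 + r < 1"
    and lam: "0 \<le> lam"
    and u: "is_positive_solution \<phi> c d h f lam u"
  shows "lam * (m * h0 * r) \<le> max (D * \<psi>2 (C / (t0 - r))) (D * \<psi>2 (C / (1 - (t0 + r))))"
proof -
  have u_cont: "continuous_on {0..1} u" using u by (simp add: is_positive_solution_def is_solution_def)
  obtain tau where tau: "tau \<in> {0..1}" "\<forall>y\<in>{0..1}. u y \<le> u tau"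
    using continuous_attains_sup[OF compact_Icc _ u_cont] by auto
  show ?thesis
  proof (cases "t0 \<le> tau")
    case True
    have "lam * (m * h0 * (t0 - (t0 - r))) \<le> D * \<psi>2 (C / (t0 - r))"
      using h r True tau
      by (intro positive_solution_lambda_bound_left[OF phi psi2 c d _ _ _ f _ _ lam u]) auto
    then show ?thesis by simp
  next
    case False
    have "lam * (m * h0 * ((1 - t0) - (1 - (t0 + r)))) \<le> D * \<psi>2 (C / (1 - (t0 + r)))"
    proof (rule positive_solution_lambda_bound_left[OF phi psi2 _ _ _ _ _ f _ _ lam
          is_positive_solution_reflect[OF phi u], where tau = "1 - tau"])
      show "\<forall>y\<in>{0..1}. u (1 - y) \<le> u (1 - (1 - tau))" using tau(2) by simp
    qed (use c d h r False tau(1) in auto)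
    then show ?thesis by simp
  qed
qed

theorem theorem3p7:
  fixes \<phi> \<psi>1 \<psi>2 c d f h :: "real \<Rightarrow> real" and f0 finf :: ereal
  assumes phi: "odd_inc_homeo \<phi>"
    and A: "condA \<phi> \<psi>1 \<psi>2"
    and c: "continuous_on {0..1} c" "\<forall>t\<in>{0..1}. c t > 0"
    and d: "continuous_on {0..1} d" "\<forall>t\<in>{0..1}. d t > 0"
    and f: "continuous_on {0..} f" "\<forall>s\<ge>0. f s \<ge> 0" "\<forall>s>0. f s > 0"
    and h: "continuous_on {0<..<1} h" "\<forall>t\<in>{0<..<1}. h t \<ge> 0" "\<exists>t\<in>{0<..<1}. h t \<noteq> 0"
    and hint: "h_integrability \<psi>1 h"
    and hpos: "0 \<le> alpha_h h" "alpha_h h < gamma1_h h" "gamma1_h h < gamma2_h h"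
              "gamma2_h h < beta_h h" "beta_h h \<le> 1"
    and f0: "((\<lambda>s. ereal (f s / \<phi> s)) \<longlongrightarrow> f0) (at_right 0)" "f0 > 0"
    and finf: "((\<lambda>s. ereal (f s / \<phi> s)) \<longlongrightarrow> finf) at_top" "finf > 0"
  shows "\<exists>lam0>0. \<forall>lam>lam0. \<not> (\<exists>u. is_positive_solution \<phi> c d h f lam u)"
proof -
  have psi2: "\<forall>x\<ge>0. \<forall>y\<ge>0. \<phi> (x * y) \<le> \<phi> x * \<psi>2 y" using A by (simp add: condA_def)
  have "continuous_on {0<..} f" "continuous_on {0<..} \<phi>" "\<forall>s>0. 0 < \<phi> s"
    using f(1) phi odd_inc_homeo_pos_iff[OF phi]
    by (auto simp: odd_inc_homeo_def intro: continuous_on_subset)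
  then obtain m where m: "0 < m" "\<forall>s>0. m * \<phi> s \<le> f s"
    using ratio_limits_pos_imp_lower_bound[OF _ _ _ _ f0 finf] f(3) by blast
  obtain t0 where t0: "t0 \<in> {0<..<1}" "0 < h t0" using h(2,3) by force
  then obtain r h0 where r: "0 < r" "cball t0 r \<subseteq> {0<..<1}" and h0: "0 < h0" "\<forall>t\<in>cball t0 r. h0 \<le> h t"
    using continuous_on_pos_imp_bounded_below_on_cball[OF h(1) open_greaterThanLessThan] by blast
  have "t0 - r \<in> cball t0 r" "t0 + r \<in> cball t0 r" using r(1) by (auto simp: dist_real_def)
  then have r01: "0 < t0 - r" "t0 + r < 1" using r(2) greaterThanLessThan_iff by (metis subsetD)+
  obtain C where C: "\<forall>t\<in>{0..1}. c t \<le> C" using continuous_attains_sup[OF compact_Icc _ c(1)] by fastforce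
  obtain D where D: "\<forall>t\<in>{0..1}. d t \<le> D" using continuous_attains_sup[OF compact_Icc _ d(1)] by fastforce
  define B where "B = max (D * \<psi>2 (C / (t0 - r))) (D * \<psi>2 (C / (1 - (t0 + r))))"
  define lam0 where "lam0 = max 1 (B / (m * h0 * r))"
  have "\<not> is_positive_solution \<phi> c d h f lam u" if "lam > lam0" for lam u
  proof
    assume u: "is_positive_solution \<phi> c d h f lam u"
    have "lam * (m * h0 * r) \<le> B" unfolding B_def
      using c(2) d(2) C D h(2) h0 m r r01 that u
      by (intro positive_solution_lambda_bound[OF phi psi2]) (auto simp: cball_eq_atLeastAtMost lam0_def)
    then have "lam \<le> B / (m * h0 * r)" using m h0 r by (simp add: pos_le_divide_eq)
    then show False using that by (simp add: lam0_def)
  qed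
  moreover have "0 < lam0" by (simp add: lam0_def)
  ultimately show ?thesis by blast
qed

end
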